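(* Let $u\in C^0(B_1)\cap C^2(\Omega^+(u)\cup\Omega^-(u))$ be harmonic on $\Omega^+(u)\cup\Omega^-(u)$, suppose $\Gamma(u)\neq\emptyset$, and suppose that $u_x$ and $u_y$ each have a non-strict sign in $\Omega^+(u)\cup\Omega^-(u)$ and $|u_x|\le M|u_y|$ there for a constant $M$. Then: (a) each connected component of a nonzero level set of $u$ is the graph of a monotone real-analytic function of $x$ with Lipschitz constant at most $M$; (b) each connected component of $\Gamma(u)$ is the graph of a monotone Lipschitz continuous function of $x$ with Lipschitz constant at most $M$.
   Context: $B_1$ is the open unit disk in $\mathbb{R}^2$. For $u\in C^0(B_1)$: $\Omega^+(u)=\operatorname{int}\{u\ge0\}$, $\Omega^-(u)=\{u<0\}$, and the free boundary is $\Gamma(u)=\partial\Omega^+(u)\setminus\partial B_1$. "Non-strict sign" means, e.g., $u_x\ge0$ throughout or $u_x\le0$ throughout the set. *)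

theory Defs
  imports "HOL-Analysis.Analysis"
begin

definition B1 :: "(real \<times> real) set" where
  "B1 = ball 0 1"

definition Omega_plus :: "(real \<times> real \<Rightarrow> real) \<Rightarrow> (real \<times> real) set" where
  "Omega_plus u = interior {p \<in> B1. u p \<ge> 0}"

definition Omega_minus :: "(real \<times> real \<Rightarrow> real) \<Rightarrow> (real \<times> real) set" where
  "Omega_minus u = {p \<in> B1. u p < 0}"

definition free_boundary :: "(real \<times> real \<Rightarrow> real) \<Rightarrow> (real \<times> real) set" where
  "free_boundary u = frontier (Omega_plus u) - sphere 0 1"

definition px :: "(real \<times> real \<Rightarrow> real) \<Rightarrow> real \<times> real \<Rightarrow> real" where
  "px u p = deriv (\<lambda>t. u (t, snd p)) (fst p)"

definition py :: "(real \<times> real \<Rightarrow> real) \<Rightarrow> real \<times> real \<Rightarrow> real" where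
  "py u p = deriv (\<lambda>t. u (fst p, t)) (snd p)"

definition C2_on :: "(real \<times> real) set \<Rightarrow> (real \<times> real \<Rightarrow> real) \<Rightarrow> bool" where
  "C2_on S u \<longleftrightarrow> u differentiable_on S \<and> px u differentiable_on S \<and> py u differentiable_on S
     \<and> continuous_on S u \<and> continuous_on S (px u) \<and> continuous_on S (py u)
     \<and> continuous_on S (px (px u)) \<and> continuous_on S (py (px u))
     \<and> continuous_on S (px (py u)) \<and> continuous_on S (py (py u))"

definition harmonic_on :: "(real \<times> real) set \<Rightarrow> (real \<times> real \<Rightarrow> real) \<Rightarrow> bool" where
  "harmonic_on S u \<longleftrightarrow> (\<forall>p\<in>S. px (px u) p + py (py u) p = 0)"

definition real_analytic_on :: "real set \<Rightarrow> (real \<Rightarrow> real) \<Rightarrow> bool" where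
  "real_analytic_on I f \<longleftrightarrow>
     (\<forall>x0\<in>I. \<exists>r>0. \<exists>a::nat \<Rightarrow> real. \<forall>x\<in>I. \<bar>x - x0\<bar> < r \<longrightarrow> (\<lambda>n. a n * (x - x0) ^ n) sums f x)"

definition graph_over :: "real set \<Rightarrow> (real \<Rightarrow> real) \<Rightarrow> (real \<times> real) set" where
  "graph_over I f = {(x, f x) | x. x \<in> I}"

definition nonstrict_sign_on :: "(real \<times> real) set \<Rightarrow> (real \<times> real \<Rightarrow> real) \<Rightarrow> bool" where
  "nonstrict_sign_on S g \<longleftrightarrow> (\<forall>p\<in>S. g p \<ge> 0) \<or> (\<forall>p\<in>S. g p \<le> 0)"

end

theory Submission
  imports Defs "HOL-Complex_Analysis.Complex_Analysis"
begin

text \<open>Choose signs a, b \<in> {-1, 1} with a u_x \<ge> 0 and b u_y \<ge> 0. Because |u_x| \<le> M |u_y|, the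
  derivative of u in every direction of the open cone K = {v. b v_2 > M max 0 (- a v_1)} is
  nonnegative wherever u \<noteq> 0, so u is nondecreasing along segments with direction in K. Hence
  Omega_plus is invariant under translations by K, no two points of the free boundary differ by a
  vector of K, and a connected set with this property is the graph of a monotone M-Lipschitz
  function of x.

  On a level set {u = c} with c \<noteq> 0, u is even strictly increasing along K, because u_y cannot
  vanish there: u_x - i u_y is holomorphic (harmonicity plus symmetry of mixed partials), its
  imaginary part has a sign, so by the open mapping theorem a zero would force u to be locally
  constant, which the nonempty free boundary rules out. Near such a point u = Re F with F
  holomorphic and F' \<noteq> 0; the level curve is the preimage under F of the line c + i \<real>, and
  inverting the holomorphic extension of its x-coordinate writes the graph function as the real
  part of a holomorphic function, which is real analytic.\<close>

lemma linear_decomp_pair: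
  fixes D :: "real \<times> real \<Rightarrow> real"
  assumes "linear D"
  shows "D h = D (1,0) * fst h + D (0,1) * snd h"
proof -
  obtain x y where h: "h = (x,y)" by (cases h)
  have "D (x,y) = D (x,0) + D (0,y)" using linear_add[OF assms, of "(x,0)" "(0,y)"] by simp
  moreover have "D (x,0) = x * D (1,0)" using linear_scale[OF assms, of x "(1,0)"] by simp
  moreover have "D (0,y) = y * D (0,1)" using linear_scale[OF assms, of y "(0,1)"] by simp
  ultimately show ?thesis by (simp add: h mult.commute)
qed

lemma has_derivative_imp_DERIV_partials:
  fixes f :: "real \<times> real \<Rightarrow> real"
  assumes "(f has_derivative D) (at (x,y))"
  shows "((\<lambda>t. f (t,y)) has_real_derivative D (1,0)) (at x)"
    and "((\<lambda>t. f (x,t)) has_real_derivative D (0,1)) (at y)"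
proof -
  have lin: "linear D" using assms by (rule has_derivative_linear)
  have sx: "D (t,0) = D (1,0) * t" and sy: "D (0,t) = D (0,1) * t" for t
    using linear_decomp_pair[OF lin, of "(t,0)"] linear_decomp_pair[OF lin, of "(0,t)"] by simp_all
  have scale: "(\<lambda>t. D (t,0)) = (*) (D (1,0))" "(\<lambda>t. D (0,t)) = (*) (D (0,1))"
    by (rule ext, rule sx) (rule ext, rule sy)
  have "((\<lambda>t. (t,y)) has_derivative (\<lambda>t. (t,0))) (at x)" by (auto intro!: derivative_eq_intros)
  from diff_chain_at[OF this, of f D] assms
  have "((\<lambda>t. f (t,y)) has_derivative (\<lambda>t. D (t,0))) (at x)" by (simp add: o_def)
  then show "((\<lambda>t. f (t,y)) has_real_derivative D (1,0)) (at x)"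
    by (simp add: has_field_derivative_def scale)
  have "((\<lambda>t. (x,t)) has_derivative (\<lambda>t. (0,t))) (at y)" by (auto intro!: derivative_eq_intros)
  from diff_chain_at[OF this, of f D] assms
  have "((\<lambda>t. f (x,t)) has_derivative (\<lambda>t. D (0,t))) (at y)" by (simp add: o_def)
  then show "((\<lambda>t. f (x,t)) has_real_derivative D (0,1)) (at y)"
    by (simp add: has_field_derivative_def scale)
qed

lemma has_derivative_gradient:
  fixes f :: "real \<times> real \<Rightarrow> real"
  assumes "f differentiable (at p)"
  shows "(f has_derivative (\<lambda>h. px f p * fst h + py f p * snd h)) (at p)"
proof -
  obtain D where D: "(f has_derivative D) (at p)" using assms differentiable_def by blast
  obtain x y where p: "p = (x,y)" by (cases p)
  have partials: "px f p = D (1,0)" "py f p = D (0,1)"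
    using has_derivative_imp_DERIV_partials[OF D[unfolded p]]
    by (simp_all add: p px_def py_def DERIV_imp_deriv)
  have "D = (\<lambda>h. px f p * fst h + py f p * snd h)"
  proof
    fix h
    show "D h = px f p * fst h + py f p * snd h"
      using linear_decomp_pair[OF has_derivative_linear[OF D], of h] by (simp only: partials)
  qed
  then show ?thesis using D by simp
qed

lemma DERIV_px:
  fixes f :: "real \<times> real \<Rightarrow> real"
  assumes "f differentiable (at (x,y))"
  shows "((\<lambda>t. f (t,y)) has_real_derivative px f (x,y)) (at x)"
  using has_derivative_imp_DERIV_partials(1)[OF has_derivative_gradient[OF assms]] by simp

lemma DERIV_py:
  fixes f :: "real \<times> real \<Rightarrow> real"
  assumes "f differentiable (at (x,y))"
  shows "((\<lambda>t. f (x,t)) has_real_derivative py f (x,y)) (at y)"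
  using has_derivative_imp_DERIV_partials(2)[OF has_derivative_gradient[OF assms]] by simp

lemma mixed_partials_meet_in_square:
  fixes f :: "real \<times> real \<Rightarrow> real"
  assumes "h > 0" and sq: "{x0..x0+h} \<times> {y0..y0+h} \<subseteq> S"
    and diff: "\<And>q. q \<in> S \<Longrightarrow> f differentiable (at q)"
      "\<And>q. q \<in> S \<Longrightarrow> px f differentiable (at q)" "\<And>q. q \<in> S \<Longrightarrow> py f differentiable (at q)"
  obtains p1 p2 where "p1 \<in> {x0..x0+h} \<times> {y0..y0+h}" "p2 \<in> {x0..x0+h} \<times> {y0..y0+h}"
    "py (px f) p1 = px (py f) p2"
proof -
  have inS: "(s,t) \<in> S" if "x0 \<le> s" "s \<le> x0+h" "y0 \<le> t" "t \<le> y0+h" for s t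
    using sq that by auto
  text \<open>Both iterated mean value expansions compute the same second difference of f.\<close>
  have "DERIV (\<lambda>s. f (s, y0+h) - f (s, y0)) s :> px f (s, y0+h) - px f (s, y0)"
    if "x0 \<le> s" "s \<le> x0+h" for s
    using that \<open>h > 0\<close> by (auto intro!: DERIV_diff DERIV_px diff inS)
  from MVT2[of x0 "x0+h", OF _ this] obtain \<xi> where \<xi>: "x0 < \<xi>" "\<xi> < x0+h" and e1:
    "f (x0+h, y0+h) - f (x0+h, y0) - (f (x0, y0+h) - f (x0, y0)) = h * (px f (\<xi>, y0+h) - px f (\<xi>, y0))"
    using \<open>h > 0\<close> by auto
  have "DERIV (\<lambda>t. px f (\<xi>, t)) t :> py (px f) (\<xi>, t)" if "y0 \<le> t" "t \<le> y0+h" for t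
    using that \<xi> by (auto intro!: DERIV_py diff inS)
  from MVT2[of y0 "y0+h", OF _ this] obtain \<eta> where \<eta>: "y0 < \<eta>" "\<eta> < y0+h" and e2:
    "px f (\<xi>, y0+h) - px f (\<xi>, y0) = h * py (px f) (\<xi>, \<eta>)"
    using \<open>h > 0\<close> by auto
  have "DERIV (\<lambda>t. f (x0+h, t) - f (x0, t)) t :> py f (x0+h, t) - py f (x0, t)"
    if "y0 \<le> t" "t \<le> y0+h" for t
    using that \<open>h > 0\<close> by (auto intro!: DERIV_diff DERIV_py diff inS)
  from MVT2[of y0 "y0+h", OF _ this] obtain \<eta>' where \<eta>': "y0 < \<eta>'" "\<eta>' < y0+h" and e3:
    "f (x0+h, y0+h) - f (x0, y0+h) - (f (x0+h, y0) - f (x0, y0)) = h * (py f (x0+h, \<eta>') - py f (x0, \<eta>'))"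
    using \<open>h > 0\<close> by auto
  have "DERIV (\<lambda>s. py f (s, \<eta>')) s :> px (py f) (s, \<eta>')" if "x0 \<le> s" "s \<le> x0+h" for s
    using that \<eta>' by (auto intro!: DERIV_px diff inS)
  from MVT2[of x0 "x0+h", OF _ this] obtain \<xi>' where \<xi>': "x0 < \<xi>'" "\<xi>' < x0+h" and e4:
    "py f (x0+h, \<eta>') - py f (x0, \<eta>') = h * px (py f) (\<xi>', \<eta>')"
    using \<open>h > 0\<close> by auto
  have "h * (h * py (px f) (\<xi>, \<eta>)) = h * (h * px (py f) (\<xi>', \<eta>'))"
    using e1 e2 e3 e4 by (simp add: algebra_simps)
  then have "py (px f) (\<xi>, \<eta>) = px (py f) (\<xi>', \<eta>')" using \<open>h > 0\<close> by simp
  then show ?thesis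
    by (rule that[of "(\<xi>, \<eta>)" "(\<xi>', \<eta>')", rotated 2]) (use \<xi> \<eta> \<xi>' \<eta>' in auto)
qed

lemma mixed_partials_eq:
  fixes f :: "real \<times> real \<Rightarrow> real"
  assumes "open S" "p \<in> S"
    and diff: "\<And>q. q \<in> S \<Longrightarrow> f differentiable (at q)"
      "\<And>q. q \<in> S \<Longrightarrow> px f differentiable (at q)" "\<And>q. q \<in> S \<Longrightarrow> py f differentiable (at q)"
    and cont: "continuous_on S (py (px f))" "continuous_on S (px (py f))"
  shows "py (px f) p = px (py f) p"
proof -
  have "\<bar>py (px f) p - px (py f) p\<bar> \<le> e" if "e > 0" for e
  proof -
    obtain d1 where d1: "d1 > 0" "\<forall>q\<in>S. dist q p < d1 \<longrightarrow> dist (py (px f) q) (py (px f) p) < e/2"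
      using cont(1) \<open>p \<in> S\<close> \<open>e > 0\<close> unfolding continuous_on_iff by (meson half_gt_zero)
    obtain d2 where d2: "d2 > 0" "\<forall>q\<in>S. dist q p < d2 \<longrightarrow> dist (px (py f) q) (px (py f) p) < e/2"
      using cont(2) \<open>p \<in> S\<close> \<open>e > 0\<close> unfolding continuous_on_iff by (meson half_gt_zero)
    obtain r0 where r0: "r0 > 0" "ball p r0 \<subseteq> S" using \<open>open S\<close> \<open>p \<in> S\<close> openE by blast
    define r where "r = min r0 (min d1 d2)"
    obtain x0 y0 where p: "p = (x0,y0)" by (cases p)
    have r: "r > 0" "ball p r \<subseteq> S" using r0 d1(1) d2(1) by (auto simp: r_def)
    have sq_ball: "{x0..x0 + r/3} \<times> {y0..y0 + r/3} \<subseteq> ball p r"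
    proof (clarsimp simp: p)
      fix s t assume "x0 \<le> s" "s \<le> x0 + r/3" "y0 \<le> t" "t \<le> y0 + r/3"
      then have "norm (x0 - s, y0 - t) < r"
        using norm_Pair_le[of "x0 - s" "y0 - t"] r(1) by simp
      then show "dist (x0, y0) (s, t) < r" by (simp add: dist_norm)
    qed
    have sq: "{x0..x0 + r/3} \<times> {y0..y0 + r/3} \<subseteq> S" using sq_ball r(2) by blast
    have "r/3 > 0" using r(1) by simp
    obtain p1 p2 where "p1 \<in> {x0..x0 + r/3} \<times> {y0..y0 + r/3}" "p2 \<in> {x0..x0 + r/3} \<times> {y0..y0 + r/3}"
        and p12: "py (px f) p1 = px (py f) p2"
      using mixed_partials_meet_in_square[OF \<open>r/3 > 0\<close> sq diff] by blast
    then have "p1 \<in> ball p r" "p2 \<in> ball p r" using sq_ball by blast+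
    then have "p1 \<in> S" "p2 \<in> S" "dist p1 p < d1" "dist p2 p < d2"
      using r(2) by (auto simp: r_def dist_commute)
    then have "dist (py (px f) p1) (py (px f) p) < e/2" "dist (px (py f) p2) (px (py f) p) < e/2"
      using d1(2) d2(2) by blast+
    then show ?thesis using p12 unfolding dist_real_def by linarith
  qed
  then show ?thesis using field_le_epsilon[of "\<bar>py (px f) p - px (py f) p\<bar>" 0] by simp
qed

lemma DERIV_nonneg_where_pos_imp_increasing:
  fixes h :: "real \<Rightarrow> real"
  assumes "a \<le> b" and cont: "continuous_on {a..b} h"
    and der: "\<And>t. a < t \<Longrightarrow> t < b \<Longrightarrow> h t > 0 \<Longrightarrow> \<exists>D. DERIV h t :> D \<and> D \<ge> 0"
    and "h a > 0"
  shows "h a \<le> h b"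
proof -
  have pos: "h t > 0" if t: "t \<in> {a..b}" for t
  proof (rule ccontr)
    define Z where "Z = {a..b} \<inter> h -` {..0}"
    assume "\<not> h t > 0"
    then have "Z \<noteq> {}" using t by (auto simp: Z_def)
    moreover have "compact Z"
    proof -
      have "closed Z"
        unfolding Z_def by (rule continuous_closed_preimage[OF cont closed_atLeastAtMost closed_atMost])
      moreover have "bounded Z" by (rule bounded_subset[OF bounded_closed_interval]) (auto simp: Z_def)
      ultimately show ?thesis by (simp add: compact_eq_bounded_closed)
    qed
    ultimately obtain z where "z \<in> Z" and first: "\<forall>s\<in>Z. z \<le> s"
      by (meson compact_attains_inf)
    then have z: "a \<le> z" "z \<le> b" "h z \<le> 0" unfolding Z_def by auto
    have "h a \<le> h z"
    proof (rule DERIV_nonneg_imp_increasing_open[OF \<open>a \<le> z\<close>])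
      show "continuous_on {a..z} h"
        using cont by (rule continuous_on_subset) (use \<open>z \<le> b\<close> in auto)
      fix s assume s: "a < s" "s < z"
      then have "s \<notin> Z" using first by force
      then have "h s > 0" using s z by (auto simp: Z_def)
      then show "\<exists>D. DERIV h s :> D \<and> D \<ge> 0" using der s z by simp
    qed
    then show False using z \<open>h a > 0\<close> by simp
  qed
  show ?thesis
  proof (rule DERIV_nonneg_imp_increasing_open[OF \<open>a \<le> b\<close> _ cont])
    fix s assume "a < s" "s < b"
    then show "\<exists>D. DERIV h s :> D \<and> D \<ge> 0" using der pos by simp
  qed
qed

lemma DERIV_nonneg_off_zeros_imp_increasing:
  fixes h :: "real \<Rightarrow> real"
  assumes "a \<le> b" and cont: "continuous_on {a..b} h"
    and der: "\<And>t. a < t \<Longrightarrow> t < b \<Longrightarrow> h t \<noteq> 0 \<Longrightarrow> \<exists>D. DERIV h t :> D \<and> D \<ge> 0"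
  shows "h a \<le> h b"
proof -
  consider "h a > 0" | "h b < 0" | "h a \<le> 0" "0 \<le> h b" by linarith
  then show ?thesis
  proof cases
    case 1
    then show ?thesis using DERIV_nonneg_where_pos_imp_increasing[OF assms(1,2)] der by auto
  next
    case 2
    text \<open>Reflect: the first-zero argument now runs backwards from b.\<close>
    define k where "k t = - h (a + b - t)" for t
    have "k a \<le> k b"
    proof (rule DERIV_nonneg_where_pos_imp_increasing[OF \<open>a \<le> b\<close>])
      show "continuous_on {a..b} k"
        unfolding k_def by (intro continuous_intros continuous_on_compose2[OF cont]) auto
      fix t assume t: "a < t" "t < b" "k t > 0"
      then obtain D where hD: "DERIV h (a + b - t) :> D" and "D \<ge> 0"
        using der[of "a + b - t"] by (auto simp: k_def)
      have "DERIV (\<lambda>t. a + b - t) t :> -1" by (auto intro!: derivative_eq_intros)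
      then have "DERIV (\<lambda>t. h (a + b - t)) t :> D * -1"
        by (rule DERIV_chain2[where g = "\<lambda>t. a + b - t", OF hD])
      then have "DERIV k t :> D"
        unfolding k_def[abs_def] using DERIV_minus by fastforce
      then show "\<exists>D. DERIV k t :> D \<and> D \<ge> 0" using \<open>D \<ge> 0\<close> by blast
    qed (use 2 in \<open>simp add: k_def\<close>)
    then show ?thesis by (simp add: k_def)
  qed simp
qed

text \<open>If a u_x \<ge> 0, b u_y \<ge> 0 and |u_x| \<le> M |u_y|, then u is nondecreasing in every direction
  of this cone.\<close>
definition ascent_cone :: "real \<Rightarrow> real \<Rightarrow> real \<Rightarrow> (real \<times> real) set" where
  "ascent_cone a b M = {v. b * snd v > M * max 0 (- a * fst v)}"

lemma open_ascent_cone: "open (ascent_cone a b M)"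
  unfolding ascent_cone_def by (intro open_Collect_less continuous_intros)

lemma ascent_cone_scaleR:
  assumes "v \<in> ascent_cone a b M" "s > 0"
  shows "s *\<^sub>R v \<in> ascent_cone a b M"
proof -
  have x: "- a * fst (s *\<^sub>R v) = s * (- a * fst v)" by simp
  have m: "max 0 (s * y) = s * max 0 y" for y :: real
    using \<open>s > 0\<close> by (simp add: max_mult_distrib_left)
  have "s * (M * max 0 (- a * fst v)) < s * (b * snd v)"
    using assms by (intro mult_strict_left_mono) (simp_all add: ascent_cone_def)
  then show ?thesis unfolding ascent_cone_def mem_Collect_eq x m by (simp add: algebra_simps)
qed

lemma not_in_ascent_cone_both_ways:
  assumes "a \<in> {-1,1}" "b \<in> {-1,1}" "M \<ge> 0"
    and "v \<notin> ascent_cone a b M" "- v \<notin> ascent_cone a b M"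
  shows "\<bar>snd v\<bar> \<le> M * \<bar>fst v\<bar>" and "fst v > 0 \<Longrightarrow> a * b * snd v \<le> 0"
proof -
  have up: "b * snd v \<le> M * max 0 (- a * fst v)" and down: "- (b * snd v) \<le> M * max 0 (a * fst v)"
    using assms(4,5) by (auto simp: ascent_cone_def)
  moreover have "\<bar>b * snd v\<bar> = \<bar>snd v\<bar>" "max 0 (- a * fst v) \<le> \<bar>fst v\<bar>" "max 0 (a * fst v) \<le> \<bar>fst v\<bar>"
    using assms(1,2) by auto
  ultimately show "\<bar>snd v\<bar> \<le> M * \<bar>fst v\<bar>"
    using mult_left_mono[OF _ \<open>M \<ge> 0\<close>] by (smt (verit))
  show "a * b * snd v \<le> 0" if "fst v > 0"
    using up down assms(1) that by auto
qed

lemma graph_over_fst_image: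
  assumes "\<And>x y y'. (x,y) \<in> T \<Longrightarrow> (x,y') \<in> T \<Longrightarrow> y = y'"
  shows "T = graph_over (fst ` T) (\<lambda>x. SOME y. (x,y) \<in> T)"
    and "(x,y) \<in> T \<Longrightarrow> (SOME y. (x,y) \<in> T) = y"
proof -
  show f: "(SOME y. (x,y) \<in> T) = y" if "(x,y) \<in> T" for x y
    using someI[of "\<lambda>y. (x,y) \<in> T", OF that] assms that by blast
  show "T = graph_over (fst ` T) (\<lambda>x. SOME y. (x,y) \<in> T)"
  proof (intro set_eqI iffI)
    fix p assume "p \<in> T"
    then have "p = (fst p, SOME y. (fst p, y) \<in> T)" "fst p \<in> fst ` T"
      using f[of "fst p" "snd p"] by auto
    then show "p \<in> graph_over (fst ` T) (\<lambda>x. SOME y. (x,y) \<in> T)" unfolding graph_over_def by blast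
  next
    fix p assume "p \<in> graph_over (fst ` T) (\<lambda>x. SOME y. (x,y) \<in> T)"
    then obtain x y where "p = (x, SOME y. (x,y) \<in> T)" "(x,y) \<in> T" unfolding graph_over_def by force
    then show "p \<in> T" using f by simp
  qed
qed

lemma cone_free_set_is_monotone_lipschitz_graph:
  assumes "a \<in> {-1,1}" "b \<in> {-1,1}" "M \<ge> 0" "connected T"
    and free: "\<And>P Q. P \<in> T \<Longrightarrow> Q \<in> T \<Longrightarrow> Q - P \<notin> ascent_cone a b M"
  shows "\<exists>I f. is_interval I \<and> T = graph_over I f \<and> (mono_on I f \<or> antimono_on I f)
           \<and> M-lipschitz_on I f"
proof -
  have lip: "\<bar>snd Q - snd P\<bar> \<le> M * \<bar>fst Q - fst P\<bar>"
    and mono: "fst P < fst Q \<Longrightarrow> a * b * (snd Q - snd P) \<le> 0" if "P \<in> T" "Q \<in> T" for P Q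
  proof -
    have "- (Q - P) \<notin> ascent_cone a b M" using free[OF that(2,1)] by simp
    note bounds = not_in_ascent_cone_both_ways[OF assms(1-3) free[OF that] this]
    show "\<bar>snd Q - snd P\<bar> \<le> M * \<bar>fst Q - fst P\<bar>" using bounds(1) by simp
    show "a * b * (snd Q - snd P) \<le> 0" if "fst P < fst Q" using bounds(2) that by simp
  qed
  have uniq: "y = y'" if "(x,y) \<in> T" "(x,y') \<in> T" for x y y'
    using lip[OF that] by simp
  define f where "f = (\<lambda>x. SOME y. (x,y) \<in> T)"
  have T: "T = graph_over (fst ` T) f"
    unfolding f_def by (rule graph_over_fst_image(1)[OF uniq])
  have f: "f x = y" if "(x,y) \<in> T" for x y
    unfolding f_def by (rule graph_over_fst_image(2)[OF uniq that])
  have fT: "(x, f x) \<in> T" if x: "x \<in> fst ` T" for x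
  proof -
    obtain y where y: "(x,y) \<in> T" using x by force
    then have "f x = y" by (rule f)
    then show ?thesis using y by simp
  qed
  have "connected (fst ` T)"
    by (rule connected_continuous_image[OF _ \<open>connected T\<close>]) (intro continuous_intros)
  then have interval: "is_interval (fst ` T)" by (simp add: is_interval_connected_1)
  have lipschitz: "M-lipschitz_on (fst ` T) f"
    using lip[OF fT fT] \<open>M \<ge> 0\<close> by (intro lipschitz_onI) (auto simp: dist_real_def abs_minus_commute)
  have monotone: "mono_on (fst ` T) f \<or> antimono_on (fst ` T) f"
  proof -
    have step: "a * b * (f y - f x) \<le> 0" if "x \<in> fst ` T" "y \<in> fst ` T" "x \<le> y" for x y
      using mono[OF fT[OF that(1)] fT[OF that(2)]] that(3) by (cases "x = y") auto
    have "antimono_on (fst ` T) f" if "a * b = 1"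
      using step that by (auto simp: monotone_on_def)
    moreover have "mono_on (fst ` T) f" if "a * b = -1"
      using step that by (auto simp: monotone_on_def)
    moreover have "a * b = 1 \<or> a * b = -1" using assms(1,2) by auto
    ultimately show ?thesis by blast
  qed
  show ?thesis by (intro exI[of _ "fst ` T"] exI[of _ f] conjI interval T monotone lipschitz)
qed

lemma holomorphic_Im_nonneg_vanishing_imp_zero:
  assumes holo: "g holomorphic_on U" and "open U" "connected U"
    and "z0 \<in> U" "g z0 = 0" and Im_nonneg: "\<forall>z\<in>U. Im (g z) \<ge> 0"
  shows "\<forall>z\<in>U. g z = 0"
proof (cases "g constant_on U")
  case True
  then show ?thesis using assms(4,5) unfolding constant_on_def by metis
next
  case False
  text \<open>Open mapping: a neighbourhood of 0 = g z0 is covered, including points with Im < 0.\<close>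
  have "open (g ` U)" by (rule open_mapping_thm[OF holo \<open>open U\<close> \<open>connected U\<close> \<open>open U\<close> subset_refl False])
  then obtain e where e: "e > 0" "ball 0 e \<subseteq> g ` U"
    using assms(4,5) openE by (metis image_eqI)
  have "- \<i> * of_real (e/2) \<in> ball 0 e" using e(1) by (simp add: norm_mult)
  then have "- \<i> * of_real (e/2) \<in> g ` U" by (rule subsetD[OF e(2)])
  then obtain z where w: "- \<i> * of_real (e/2) = g z" and "z \<in> U" by (rule imageE)
  have "Im (g z) = - e/2" by (simp add: w[symmetric])
  moreover have "Im (g z) \<ge> 0" using Im_nonneg \<open>z \<in> U\<close> by blast
  ultimately show ?thesis using e(1) by linarith
qed

lemma Re_holomorphic_real_power_series:
  assumes "\<phi> holomorphic_on ball (complex_of_real x0) r"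
  shows "\<exists>a. \<forall>x. \<bar>x - x0\<bar> < r \<longrightarrow> (\<lambda>n. a n * (x - x0) ^ n) sums Re (\<phi> (of_real x))"
proof (intro exI allI impI)
  fix x :: real assume "\<bar>x - x0\<bar> < r"
  then have "complex_of_real x \<in> ball (of_real x0) r" by (simp add: dist_real_def abs_minus_commute)
  from sums_Re[OF holomorphic_power_series[OF assms this]]
  have "(\<lambda>n. Re ((deriv ^^ n) \<phi> (of_real x0) / fact n * (of_real x - of_real x0) ^ n))
          sums Re (\<phi> (of_real x))" .
  moreover have "Re ((deriv ^^ n) \<phi> (of_real x0) / fact n * (of_real x - of_real x0) ^ n)
      = Re ((deriv ^^ n) \<phi> (of_real x0) / fact n) * (x - x0) ^ n" for n
  proof -
    have pw: "(complex_of_real x - of_real x0) ^ n = of_real ((x - x0) ^ n)" by simp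
    have Re_mult: "Re (w * complex_of_real r) = Re w * r" for w r by simp
    show ?thesis unfolding pw by (rule Re_mult)
  qed
  ultimately show "(\<lambda>n. Re ((deriv ^^ n) \<phi> (of_real x0) / fact n) * (x - x0) ^ n) sums Re (\<phi> (of_real x))"
    by simp
qed

text \<open>X and Y are (h t \<plusminus> cnj (h (cnj t))) / 2 (divided by i for Y), the holomorphic extensions
  of Re h and Im h off the real axis.\<close>
lemma holomorphic_real_imag_parts:
  fixes h :: "complex \<Rightarrow> complex"
  assumes holo: "h holomorphic_on ball 0 \<epsilon>" and "\<epsilon> > 0"
  obtains X Y where "X holomorphic_on ball 0 \<epsilon>" "Y holomorphic_on ball 0 \<epsilon>"
    "\<forall>t. X (cnj t) = cnj (X t)" "deriv X 0 = of_real (Re (deriv h 0))"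
    "\<forall>t. X (of_real t) = of_real (Re (h (of_real t)))" "\<forall>t. Y (of_real t) = of_real (Im (h (of_real t)))"
proof -
  define hs where "hs = cnj \<circ> h \<circ> cnj"
  have hd: "(h has_field_derivative deriv h z) (at z)" if "z \<in> ball 0 \<epsilon>" for z
    using holo that by (simp add: holomorphic_derivI)
  have hsd: "(hs has_field_derivative cnj (deriv h (cnj z))) (at z)" if "z \<in> ball 0 \<epsilon>" for z
    unfolding hs_def by (rule has_field_derivative_cnj_cnj) (use hd that in simp)
  have hsholo: "hs holomorphic_on ball 0 \<epsilon>"
    using hsd holomorphic_on_open[OF open_ball] by blast
  define X where "X t = (h t + hs t) / 2" for t
  define Y where "Y t = (h t - hs t) / (2 * \<i>)" for t
  have "X holomorphic_on ball 0 \<epsilon>" "Y holomorphic_on ball 0 \<epsilon>"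
    unfolding X_def Y_def using holo hsholo by (auto intro!: holomorphic_intros)
  moreover have "\<forall>t. X (cnj t) = cnj (X t)" by (simp add: X_def hs_def)
  moreover have "DERIV X 0 :> (deriv h 0 + cnj (deriv h 0)) / 2"
    unfolding X_def[abs_def] using hd[of 0] hsd[of 0] \<open>\<epsilon> > 0\<close>
    by (auto intro!: derivative_eq_intros)
  then have "deriv X 0 = of_real (Re (deriv h 0))" by (simp add: DERIV_imp_deriv complex_add_cnj)
  moreover have "\<forall>t. X (of_real t) = of_real (Re (h (of_real t)))"
    by (simp add: X_def hs_def complex_add_cnj)
  moreover have "\<forall>t. Y (of_real t) = of_real (Im (h (of_real t)))"
    by (simp add: Y_def hs_def complex_diff_cnj complex_eq_iff)
  ultimately show ?thesis by (rule that)
qed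

text \<open>Locally the real curve t \<mapsto> h t is the graph of Re \<phi>, where \<phi> is Y composed with a local
  inverse of X, for X and Y as in the previous lemma.\<close>
lemma holomorphic_curve_local_graph:
  fixes h :: "complex \<Rightarrow> complex"
  assumes holo: "h holomorphic_on ball 0 \<epsilon>" and "\<epsilon> > 0" and speed: "Re (deriv h 0) \<noteq> 0"
  shows "\<exists>r \<phi>. r > 0 \<and> \<phi> holomorphic_on ball (of_real (Re (h 0))) r \<and>
    (\<forall>x. \<bar>x - Re (h 0)\<bar> < r \<longrightarrow>
        (\<exists>t. \<bar>t\<bar> < \<epsilon> \<and> Re (h (of_real t)) = x \<and> Re (\<phi> (of_real x)) = Im (h (of_real t))))"
proof -
  obtain X Y where Xholo: "X holomorphic_on ball 0 \<epsilon>" and Yholo: "Y holomorphic_on ball 0 \<epsilon>"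
    and X_cnj: "\<forall>t. X (cnj t) = cnj (X t)" and dX0: "deriv X 0 = of_real (Re (deriv h 0))"
    and X_real: "\<forall>t. X (of_real t) = of_real (Re (h (of_real t)))"
    and Y_real: "\<forall>t. Y (of_real t) = of_real (Im (h (of_real t)))"
    by (rule holomorphic_real_imag_parts[OF holo \<open>\<epsilon> > 0\<close>])
  have dX: "deriv X 0 \<noteq> 0" using speed dX0 by simp
  obtain r2 where r2: "r2 > 0" "ball (0::complex) r2 \<subseteq> ball 0 \<epsilon>" "open (X ` ball 0 r2)" "inj_on X (ball 0 r2)"
    by (rule has_complex_derivative_locally_invertible[OF Xholo _ open_ball dX]) (use \<open>\<epsilon> > 0\<close> in simp)
  obtain Xinv where Xinv_holo: "Xinv holomorphic_on X ` ball 0 r2"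
    and Xinv: "\<And>t. t \<in> ball 0 r2 \<Longrightarrow> Xinv (X t) = t"
    using holomorphic_has_inverse[OF holomorphic_on_subset[OF Xholo r2(2)] open_ball r2(4)] by metis
  have "X 0 \<in> X ` ball 0 r2" using r2(1) by simp
  moreover have "X 0 = of_real (Re (h 0))" using X_real[rule_format, of 0] by simp
  ultimately obtain r where r: "r > 0" "ball (of_real (Re (h 0))) r \<subseteq> X ` ball 0 r2"
    using r2(3) openE by metis
  show ?thesis
  proof (rule exI[of _ r], rule exI[of _ "Y \<circ> Xinv"], intro conjI allI impI)
    show "r > 0" by (rule r(1))
    have "Xinv ` ball (of_real (Re (h 0))) r \<subseteq> ball 0 \<epsilon>" using r(2) Xinv r2(2) by force
    then show "(Y \<circ> Xinv) holomorphic_on ball (of_real (Re (h 0))) r"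
      by (intro holomorphic_on_compose_gen[OF holomorphic_on_subset[OF Xinv_holo r(2)] Yholo])
  next
    fix x :: real assume "\<bar>x - Re (h 0)\<bar> < r"
    then have "complex_of_real x \<in> ball (of_real (Re (h 0))) r"
      by (simp add: dist_real_def abs_minus_commute)
    then have "complex_of_real x \<in> X ` ball 0 r2" using r(2) by (rule subsetD[rotated])
    then obtain t where "of_real x = X t" and t: "t \<in> ball 0 r2" by (rule imageE)
    then have Xt: "X t = of_real x" by simp
    text \<open>X commutes with conjugation and is injective near 0, so the preimage of a real point is real.\<close>
    have "cnj t \<in> ball 0 r2" "X (cnj t) = X t" using t Xt by (simp_all add: X_cnj)
    then have "cnj t = t" using r2(4) t inj_onD by metis
    then have t_real: "t = of_real (Re t)" by (simp add: complex_eq_iff)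
    show "\<exists>t. \<bar>t\<bar> < \<epsilon> \<and> Re (h (of_real t)) = x \<and> Re ((Y \<circ> Xinv) (of_real x)) = Im (h (of_real t))"
    proof (intro exI[of _ "Re t"] conjI)
      show "\<bar>Re t\<bar> < \<epsilon>" using t r2(2) abs_Re_le_cmod[of t] by (auto simp: dist_norm)
      show "Re (h (of_real (Re t))) = x" using Xt X_real[rule_format, of "Re t"] t_real by simp
      show "Re ((Y \<circ> Xinv) (of_real x)) = Im (h (of_real (Re t)))"
        using Xinv[OF t] Xt Y_real[rule_format, of "Re t"] t_real by simp
    qed
  qed
qed

lemma holomorphic_local_inverse_on_vertical_line:
  assumes holo: "F holomorphic_on ball z0 \<rho>" and "\<rho> > 0" and dF: "deriv F z0 \<noteq> 0"
  shows "\<exists>\<epsilon> h. \<epsilon> > 0 \<and> h holomorphic_on ball 0 \<epsilon> \<and> h 0 = z0 \<and> deriv h 0 = \<i> / deriv F z0 \<and>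
           (\<forall>t\<in>ball 0 \<epsilon>. h t \<in> ball z0 \<rho> \<and> F (h t) = F z0 + \<i> * t)"
proof -
  obtain r where r: "r > 0" "ball z0 r \<subseteq> ball z0 \<rho>" "open (F ` ball z0 r)" "inj_on F (ball z0 r)"
    by (rule has_complex_derivative_locally_invertible[OF holo _ open_ball dF]) (use \<open>\<rho> > 0\<close> in simp)
  let ?W = "F ` ball z0 r"
  obtain G where G: "G holomorphic_on ?W"
    and dG: "\<And>z. z \<in> ball z0 r \<Longrightarrow> deriv F z * deriv G (F z) = 1"
    and GF: "\<And>z. z \<in> ball z0 r \<Longrightarrow> G (F z) = z"
    using holomorphic_has_inverse[OF holomorphic_on_subset[OF holo r(2)] open_ball r(4)] by metis
  have "F z0 \<in> ?W" using r(1) by simp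
  then obtain \<epsilon> where \<epsilon>: "\<epsilon> > 0" "ball (F z0) \<epsilon> \<subseteq> ?W" using r(3) openE by metis
  define h where "h t = G (F z0 + \<i> * t)" for t
  have line: "F z0 + \<i> * t \<in> ?W" if "t \<in> ball 0 \<epsilon>" for t
  proof -
    have "dist (F z0) (F z0 + \<i> * t) = norm t" by (simp add: dist_norm norm_mult)
    then show ?thesis using that \<epsilon>(2) by auto
  qed
  have inverse: "h t \<in> ball z0 \<rho> \<and> F (h t) = F z0 + \<i> * t" if t: "t \<in> ball 0 \<epsilon>" for t
  proof -
    obtain w where w: "F z0 + \<i> * t = F w" "w \<in> ball z0 r" using line[OF t] by (rule imageE)
    then have "h t = w" by (simp add: h_def GF)
    then show ?thesis using w r(2) by auto
  qed
  have hd: "DERIV h t :> deriv G (F z0 + \<i> * t) * \<i>" if "t \<in> ball 0 \<epsilon>" for t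
  proof -
    have "DERIV G (F z0 + \<i> * t) :> deriv G (F z0 + \<i> * t)"
      using G r(3) line[OF that] by (simp add: holomorphic_derivI)
    moreover have "DERIV (\<lambda>t. F z0 + \<i> * t) t :> \<i>" by (auto intro!: derivative_eq_intros)
    ultimately show ?thesis unfolding h_def by (rule DERIV_chain2)
  qed
  have "h holomorphic_on ball 0 \<epsilon>" using hd holomorphic_on_open[OF open_ball] by blast
  moreover have "h 0 = z0" using GF[of z0] r(1) by (simp add: h_def)
  moreover have "deriv h 0 = \<i> / deriv F z0"
    using DERIV_imp_deriv[OF hd[of 0]] dG[of z0] \<epsilon>(1) r(1) dF by (simp add: field_simps)
  ultimately show ?thesis using \<epsilon>(1) inverse by blast
qed

definition complex_of_point :: "real \<times> real \<Rightarrow> complex" where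
  "complex_of_point p = Complex (fst p) (snd p)"

definition point_of_complex :: "complex \<Rightarrow> real \<times> real" where
  "point_of_complex z = (Re z, Im z)"

lemma point_of_complex_inverse [simp]: "point_of_complex (complex_of_point p) = p"
  by (simp add: point_of_complex_def complex_of_point_def)

lemma complex_of_point_inverse [simp]: "complex_of_point (point_of_complex z) = z"
  by (simp add: point_of_complex_def complex_of_point_def)

lemma has_derivative_complex_of_point: "(complex_of_point has_derivative complex_of_point) (at p)"
proof -
  have "complex_of_point = (\<lambda>p. of_real (fst p) + \<i> * of_real (snd p))"
    by (auto simp: fun_eq_iff complex_of_point_def complex_eq_iff)
  moreover have "((\<lambda>p. of_real (fst p) + \<i> * of_real (snd p)) has_derivative
      (\<lambda>p. of_real (fst p) + \<i> * of_real (snd p))) (at p)"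
    by (auto intro!: derivative_eq_intros)
  ultimately show ?thesis by simp
qed

lemma has_derivative_point_of_complex: "(point_of_complex has_derivative point_of_complex) (at z)"
  unfolding point_of_complex_def[abs_def] by (auto intro!: derivative_eq_intros)

lemma continuous_on_point_of_complex: "continuous_on A point_of_complex"
  using has_derivative_bounded_linear[OF has_derivative_point_of_complex] linear_continuous_on by blast

lemma open_point_preimage: "open V \<Longrightarrow> open (point_of_complex -` V)"
  using continuous_open_preimage[OF continuous_on_point_of_complex open_UNIV] by simp

lemma continuous_on_complex_of_point: "continuous_on A complex_of_point"
  using has_derivative_bounded_linear[OF has_derivative_complex_of_point] linear_continuous_on by blast

lemma dist_complex_of_point: "dist (complex_of_point p) (complex_of_point q) = dist p q"
  by (cases p, cases q) (simp add: complex_of_point_def dist_norm norm_complex_def norm_Pair)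

lemma open_B1: "open B1"
  by (simp add: B1_def)

lemma open_Omega_plus: "open (Omega_plus u)"
  by (simp add: Omega_plus_def)

lemma Omega_plus_subset: "Omega_plus u \<subseteq> {p \<in> B1. u p \<ge> 0}"
  unfolding Omega_plus_def by (rule interior_subset)

lemma free_boundary_subset_B1: "free_boundary u \<subseteq> B1"
proof -
  have "Omega_plus u \<subseteq> cball 0 1"
    using Omega_plus_subset[of u] ball_subset_cball[of 0 1] unfolding B1_def by blast
  then have "closure (Omega_plus u) \<subseteq> cball 0 1" by (rule closure_minimal) simp
  then show ?thesis unfolding free_boundary_def B1_def frontier_def by auto
qed

lemma free_boundary_empty_if_constant:
  assumes "\<forall>p\<in>B1. u p = c"
  shows "free_boundary u = {}"
proof (cases "c \<ge> 0")
  case True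
  then have "{p \<in> B1. u p \<ge> 0} = ball 0 1" using assms by (auto simp: B1_def)
  then show ?thesis by (simp add: free_boundary_def Omega_plus_def)
next
  case False
  then have "{p \<in> B1. u p \<ge> 0} = {}" using assms by auto
  then have "Omega_plus u = {}" by (simp only: Omega_plus_def interior_empty)
  then show ?thesis by (simp add: free_boundary_def)
qed

lemma segment_in_B1:
  assumes "P \<in> B1" "P + v \<in> B1" "0 \<le> t" "t \<le> 1"
  shows "P + t *\<^sub>R v \<in> B1"
proof -
  have "(1 - t) *\<^sub>R P + t *\<^sub>R (P + v) \<in> B1"
    using convexD[OF convex_ball[of 0 1], of P "P + v" "1 - t" t] assms by (simp add: B1_def)
  moreover have "(1 - t) *\<^sub>R P + t *\<^sub>R (P + v) = P + t *\<^sub>R v" by (simp add: algebra_simps)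
  ultimately show ?thesis by simp
qed

locale monotone_two_phase =
  fixes u :: "real \<times> real \<Rightarrow> real" and M a b :: real
  assumes cont: "continuous_on B1 u"
    and C2: "C2_on (Omega_plus u \<union> Omega_minus u) u"
    and harm: "harmonic_on (Omega_plus u \<union> Omega_minus u) u"
    and Gamma_ne: "free_boundary u \<noteq> {}"
    and bound: "\<forall>p \<in> Omega_plus u \<union> Omega_minus u. \<bar>px u p\<bar> \<le> M * \<bar>py u p\<bar>"
    and a_unit: "a \<in> {-1, 1}" and b_unit: "b \<in> {-1, 1}"
    and a_sign: "\<forall>p \<in> Omega_plus u \<union> Omega_minus u. a * px u p \<ge> 0"
    and b_sign: "\<forall>p \<in> Omega_plus u \<union> Omega_minus u. b * py u p \<ge> 0"
begin

abbreviation S :: "(real \<times> real) set" where "S \<equiv> Omega_plus u \<union> Omega_minus u"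

lemma open_Omega_minus: "open (Omega_minus u)"
proof -
  have "Omega_minus u = B1 \<inter> u -` {..<0}" by (auto simp: Omega_minus_def)
  then show ?thesis using continuous_open_preimage[OF cont open_B1 open_lessThan] by simp
qed

lemma open_S: "open S"
  using open_Omega_plus open_Omega_minus by blast

lemma S_subset_B1: "S \<subseteq> B1"
  using Omega_plus_subset by (auto simp: Omega_minus_def)

lemma nonzero_in_S:
  assumes "p \<in> B1" "u p \<noteq> 0"
  shows "p \<in> S"
proof (cases "u p < 0")
  case True
  then show ?thesis using assms by (auto simp: Omega_minus_def)
next
  case False
  have "B1 \<inter> u -` {0<..} \<subseteq> {p \<in> B1. u p \<ge> 0}" by auto
  moreover have "open (B1 \<inter> u -` {0<..})" by (rule continuous_open_preimage[OF cont open_B1 open_greaterThan])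
  ultimately have "B1 \<inter> u -` {0<..} \<subseteq> Omega_plus u"
    unfolding Omega_plus_def by (rule interior_maximal)
  then show ?thesis using assms False by auto
qed

lemma differentiable_at_S:
  assumes "q \<in> S"
  shows "u differentiable (at q)" "px u differentiable (at q)" "py u differentiable (at q)"
  using C2 assms open_S by (auto simp: C2_on_def differentiable_on_eq_differentiable_at)

lemma not_constant: "\<not> (\<forall>p\<in>B1. u p = c)"
  using free_boundary_empty_if_constant Gamma_ne by blast

lemma DERIV_along_line:
  assumes "P + t *\<^sub>R v \<in> S"
  shows "((\<lambda>s. u (P + s *\<^sub>R v)) has_real_derivative
           px u (P + t *\<^sub>R v) * fst v + py u (P + t *\<^sub>R v) * snd v) (at t)"
proof -
  let ?q = "P + t *\<^sub>R v"
  have "((\<lambda>s. P + s *\<^sub>R v) has_derivative (\<lambda>h. h *\<^sub>R v)) (at t)"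
    by (auto intro!: derivative_eq_intros)
  from diff_chain_at[OF this has_derivative_gradient[OF differentiable_at_S(1)[OF assms]]]
  have "((\<lambda>s. u (P + s *\<^sub>R v)) has_derivative
          (\<lambda>h. px u ?q * fst (h *\<^sub>R v) + py u ?q * snd (h *\<^sub>R v))) (at t)"
    by (simp add: o_def)
  moreover have "(\<lambda>h. px u ?q * fst (h *\<^sub>R v) + py u ?q * snd (h *\<^sub>R v))
      = (*) (px u ?q * fst v + py u ?q * snd v)"
    by (auto simp: fun_eq_iff algebra_simps)
  ultimately show ?thesis by (simp add: has_field_derivative_def)
qed

text \<open>The slope is only needed where u \<noteq> 0: the zero set of u may leave S, where u need not be
  differentiable.\<close>
lemma u_le_along_segment:
  assumes slope: "\<And>q. q \<in> S \<Longrightarrow> u q \<noteq> 0 \<Longrightarrow> 0 \<le> px u q * fst v + py u q * snd v"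
    and "P \<in> B1" "P + v \<in> B1"
  shows "u P \<le> u (P + v)"
proof -
  define h where "h = (\<lambda>s. u (P + s *\<^sub>R v))"
  have "continuous_on {0..1} h"
    unfolding h_def
    by (rule continuous_on_compose2[OF cont]) (auto intro!: continuous_intros segment_in_B1 assms)
  then have "h 0 \<le> h 1"
  proof (rule DERIV_nonneg_off_zeros_imp_increasing[rotated])
    fix t :: real assume t: "0 < t" "t < 1" "h t \<noteq> 0"
    have "P + t *\<^sub>R v \<in> B1" by (rule segment_in_B1) (use assms(2,3) t in auto)
    then have q: "P + t *\<^sub>R v \<in> S" by (rule nonzero_in_S) (use t(3) in \<open>simp add: h_def\<close>)
    show "\<exists>D. DERIV h t :> D \<and> D \<ge> 0"
      using DERIV_along_line[OF q] slope[OF q] t(3) unfolding h_def by blast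
  qed simp
  then show ?thesis by (simp add: h_def)
qed

lemma M_nonneg: "M \<ge> 0"
proof (rule ccontr)
  assume "\<not> M \<ge> 0"
  then have "M < 0" by simp
  have flat: "px u q = 0 \<and> py u q = 0" if "q \<in> S" for q
  proof -
    have le: "\<bar>px u q\<bar> \<le> M * \<bar>py u q\<bar>" using bound that by blast
    have "M * \<bar>py u q\<bar> \<le> 0" using \<open>M < 0\<close> by (simp add: mult_nonpos_nonneg)
    then have "\<bar>px u q\<bar> = 0" "M * \<bar>py u q\<bar> = 0" using le abs_ge_zero[of "px u q"] by linarith+
    then show ?thesis using \<open>M < 0\<close> by simp
  qed
  have "u P \<le> u Q" if "P \<in> B1" "Q \<in> B1" for P Q
  proof -
    have "u P \<le> u (P + (Q - P))" by (rule u_le_along_segment) (use flat that in auto)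
    then show ?thesis by simp
  qed
  then have "\<forall>p\<in>B1. u p = u 0" by (metis B1_def centre_in_ball order_antisym zero_less_one)
  then show False using not_constant by blast
qed

lemma gradient_dot_lower_bound:
  assumes "q \<in> S"
  shows "b * py u q * (b * snd v - M * max 0 (- a * fst v)) \<le> px u q * fst v + py u q * snd v"
proof -
  define A where "A = a * px u q"
  define B where "B = b * py u q"
  define m where "m = max 0 (- a * fst v)"
  have A: "A \<ge> 0" and B: "B \<ge> 0" using a_sign b_sign assms by (auto simp: A_def B_def)
  have "\<bar>px u q\<bar> = A" "\<bar>py u q\<bar> = B"
    using A B a_unit b_unit by (auto simp: A_def B_def abs_mult)
  then have AB: "A \<le> M * B" using bound assms by auto
  have dot: "px u q * fst v + py u q * snd v = A * (a * fst v) + B * (b * snd v)"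
    using a_unit b_unit by (auto simp: A_def B_def)
  have m: "m \<ge> 0" "- (a * fst v) \<le> m" by (auto simp: m_def)
  have "A * (- (a * fst v)) \<le> A * m" by (rule mult_left_mono[OF m(2) A])
  then have "- (A * (a * fst v)) \<le> A * m" by simp
  moreover have "A * m \<le> M * B * m" by (rule mult_right_mono[OF AB m(1)])
  moreover have "B * (b * snd v - M * m) = B * (b * snd v) - M * B * m" by (simp add: algebra_simps)
  ultimately have "B * (b * snd v - M * m) \<le> A * (a * fst v) + B * (b * snd v)" by linarith
  then show ?thesis unfolding dot B_def m_def by simp
qed

lemma gradient_dot_cone_nonneg:
  assumes "q \<in> S" "v \<in> ascent_cone a b M"
  shows "0 \<le> px u q * fst v + py u q * snd v"
proof -
  have "0 \<le> b * py u q" using b_sign assms(1) by blast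
  moreover have "0 \<le> b * snd v - M * max 0 (- a * fst v)" using assms(2) by (simp add: ascent_cone_def)
  ultimately have "0 \<le> b * py u q * (b * snd v - M * max 0 (- a * fst v))" by (rule mult_nonneg_nonneg)
  then show ?thesis using gradient_dot_lower_bound[OF assms(1), of v] by linarith
qed

lemma u_le_along_cone:
  assumes "v \<in> ascent_cone a b M" "P \<in> B1" "P + v \<in> B1"
  shows "u P \<le> u (P + v)"
  by (rule u_le_along_segment[OF _ assms(2,3)]) (rule gradient_dot_cone_nonneg[OF _ assms(1)])

lemma Omega_plus_add_cone:
  assumes "p \<in> Omega_plus u" "v \<in> ascent_cone a b M" "p + v \<in> B1"
  shows "p + v \<in> Omega_plus u"
proof -
  obtain r where r: "r > 0" "ball p r \<subseteq> Omega_plus u" using open_Omega_plus assms(1) openE by blast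
  have "ball (p + v) r \<inter> B1 \<subseteq> {q \<in> B1. u q \<ge> 0}"
  proof
    fix z assume z: "z \<in> ball (p + v) r \<inter> B1"
    have "dist p (z - v) = dist (p + v) z" by (simp add: dist_norm algebra_simps)
    then have "z - v \<in> ball p r" using z by simp
    then have "z - v \<in> Omega_plus u" using r(2) by blast
    then have "z - v \<in> B1" "u (z - v) \<ge> 0" using Omega_plus_subset[of u] by blast+
    moreover have "u (z - v) \<le> u (z - v + v)"
      by (rule u_le_along_cone[OF assms(2) \<open>z - v \<in> B1\<close>]) (use z in simp)
    ultimately show "z \<in> {q \<in> B1. u q \<ge> 0}" using z by auto
  qed
  moreover have "open (ball (p + v) r \<inter> B1)" by (simp add: B1_def open_Int)
  moreover have "p + v \<in> ball (p + v) r \<inter> B1" using r(1) assms(3) by simp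
  ultimately show ?thesis unfolding Omega_plus_def by (meson interior_maximal subsetD)
qed

lemma closure_Omega_plus_add_cone:
  assumes "P \<in> closure (Omega_plus u)" "Q \<in> B1" "Q - P \<in> ascent_cone a b M"
  shows "Q \<in> Omega_plus u"
proof -
  obtain d where d: "d > 0" "ball (Q - P) d \<subseteq> ascent_cone a b M"
    using open_ascent_cone assms(3) openE by blast
  obtain w where w: "w \<in> Omega_plus u" "dist w P < d"
    using assms(1) d(1) closure_approachable by blast
  have "dist (Q - P) (Q - w) = dist w P" by (simp add: dist_norm algebra_simps)
  then have "Q - w \<in> ball (Q - P) d" using w(2) by simp
  then have "Q - w \<in> ascent_cone a b M" using d(2) by blast
  from Omega_plus_add_cone[OF w(1) this] show ?thesis using assms(2) by simp
qed

lemma free_boundary_cone_free: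
  assumes "P \<in> free_boundary u" "Q \<in> free_boundary u"
  shows "Q - P \<notin> ascent_cone a b M"
proof
  assume cone: "Q - P \<in> ascent_cone a b M"
  have "P \<in> closure (Omega_plus u)" using assms(1) by (simp add: free_boundary_def frontier_def)
  moreover have "Q \<in> B1" using assms(2) free_boundary_subset_B1 by blast
  ultimately have "Q \<in> Omega_plus u" using cone by (rule closure_Omega_plus_add_cone)
  moreover have "Q \<notin> interior (Omega_plus u)" using assms(2) by (simp add: free_boundary_def frontier_def)
  ultimately show False by (simp add: interior_open[OF open_Omega_plus])
qed

lemma free_boundary_component_graph:
  assumes "C \<in> components (free_boundary u)"
  shows "\<exists>I f. is_interval I \<and> C = graph_over I f \<and> (mono_on I f \<or> antimono_on I f)
            \<and> M-lipschitz_on I f"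
proof (rule cone_free_set_is_monotone_lipschitz_graph[OF a_unit b_unit M_nonneg in_components_connected[OF assms]])
  fix P Q assume "P \<in> C" "Q \<in> C"
  then show "Q - P \<notin> ascent_cone a b M"
    using free_boundary_cone_free in_components_subset[OF assms] by blast
qed

lemma mixed_partials_commute:
  assumes "q \<in> S"
  shows "py (px u) q = px (py u) q"
  using mixed_partials_eq[OF open_S assms differentiable_at_S(1) differentiable_at_S(2) differentiable_at_S(3)] C2
  by (simp add: C2_on_def)

definition complex_gradient :: "complex \<Rightarrow> complex" where
  "complex_gradient z = of_real (px u (point_of_complex z)) - \<i> * of_real (py u (point_of_complex z))"

text \<open>Cauchy-Riemann for u_x - i u_y: the x-equation is harmonicity, the y-equation is the
  symmetry of the mixed partials.\<close>
lemma complex_gradient_has_derivative: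
  assumes "point_of_complex z \<in> S"
  shows "(complex_gradient has_field_derivative
           of_real (px (px u) (point_of_complex z)) - \<i> * of_real (py (px u) (point_of_complex z))) (at z)"
proof -
  define q where "q = point_of_complex z"
  have q: "q \<in> S" using assms by (simp add: q_def)
  define A where "A = px (px u) q"
  define B where "B = py (px u) q"
  have "px (py u) q = B" using mixed_partials_commute[OF q] by (simp add: B_def)
  moreover have "py (py u) q = - A" using harm q unfolding harmonic_on_def A_def by force
  ultimately have dpx: "(px u has_derivative (\<lambda>h. A * fst h + B * snd h)) (at q)"
    and dpy: "(py u has_derivative (\<lambda>h. B * fst h - A * snd h)) (at q)"
    using has_derivative_gradient[OF differentiable_at_S(2)[OF q]]
      has_derivative_gradient[OF differentiable_at_S(3)[OF q]]
    by (simp_all add: A_def B_def)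
  have "(complex_gradient has_derivative
      (\<lambda>h. of_real (A * Re h + B * Im h) - \<i> * of_real (B * Re h - A * Im h))) (at z)"
    unfolding complex_gradient_def[abs_def]
    using diff_chain_at[OF has_derivative_point_of_complex dpx[unfolded q_def]]
      diff_chain_at[OF has_derivative_point_of_complex dpy[unfolded q_def]]
    by (auto simp: o_def point_of_complex_def intro!: derivative_eq_intros)
  moreover have "(\<lambda>h. of_real (A * Re h + B * Im h) - \<i> * of_real (B * Re h - A * Im h))
      = (*) (of_real A - \<i> * of_real B)"
    by (auto simp: fun_eq_iff complex_eq_iff algebra_simps)
  ultimately show ?thesis by (simp add: has_field_derivative_def A_def B_def q_def)
qed

lemma complex_gradient_holomorphic: "complex_gradient holomorphic_on point_of_complex -` S"
  using complex_gradient_has_derivative holomorphic_on_open[OF open_point_preimage[OF open_S]] by blast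

lemma component_not_level:
  assumes "q \<in> S" "c \<noteq> 0" and level: "\<forall>p\<in>connected_component_set S q. u p = c"
  shows False
proof -
  let ?U = "connected_component_set S q"
  have no_frontier: "B1 \<inter> frontier ?U = {}"
  proof -
    have "closedin (top_of_set B1) {p \<in> B1. u p = c}"
      by (rule continuous_closedin_preimage_constant[OF cont])
    then obtain T where T: "closed T" "{p \<in> B1. u p = c} = B1 \<inter> T"
      unfolding closedin_closed by blast
    have "?U \<subseteq> T" using level connected_component_subset[of S q] S_subset_B1 T(2) by blast
    then have "closure ?U \<subseteq> T" using T(1) by (simp add: closure_minimal)
    text \<open>A point of the frontier inside B1 would carry the nonzero value c, hence lie in the
      open set S, but components of S have their frontier in the frontier of S.\<close>
    have "p \<in> S" if "p \<in> B1 \<inter> frontier ?U" for p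
    proof -
      have "p \<in> B1 \<inter> T" using that \<open>closure ?U \<subseteq> T\<close> by (auto simp: frontier_def)
      then have "p \<in> {p \<in> B1. u p = c}" using T(2) by simp
      then show "p \<in> S" using nonzero_in_S \<open>c \<noteq> 0\<close> by auto
    qed
    moreover have "frontier ?U \<inter> S = {}"
      using frontier_of_connected_component_subset[of S q] open_S by (auto simp: frontier_def interior_open)
    ultimately show ?thesis by blast
  qed
  have "B1 - ?U = {}"
  proof (rule ccontr)
    assume "B1 - ?U \<noteq> {}"
    moreover have "B1 \<inter> ?U \<noteq> {}" using assms(1) S_subset_B1 by auto
    moreover have "connected B1" by (simp add: B1_def)
    ultimately have "B1 \<inter> frontier ?U \<noteq> {}" using connected_Int_frontier by metis
    then show False using no_frontier by simp
  qed
  then have "\<forall>p\<in>B1. u p = c" using level by blast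
  then show False using not_constant by blast
qed

text \<open>Rotating by -b makes the imaginary part b u_y of the rotated gradient nonnegative, so the
  gradient cannot vanish at a point of a component of S without vanishing on all of it.\<close>
lemma gradient_vanishes_on_component:
  assumes "q \<in> S" "px u q = 0" "py u q = 0" "p \<in> connected_component_set S q"
  shows "px u p = 0 \<and> py u p = 0"
proof -
  let ?U = "connected_component_set S q"
  let ?V = "point_of_complex -` ?U"
  have "open ?V" by (rule open_point_preimage[OF open_connected_component[OF open_S]])
  have "connected (complex_of_point ` ?U)"
    by (rule connected_continuous_image[OF continuous_on_complex_of_point connected_connected_component])
  moreover have "?V = complex_of_point ` ?U" by (force simp: image_iff)
  ultimately have "connected ?V" by simp
  have UV: "point_of_complex z \<in> S" if "z \<in> ?V" for z
    using that connected_component_subset by blast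
  then have "complex_gradient holomorphic_on ?V"
    by (blast intro: holomorphic_on_subset[OF complex_gradient_holomorphic])
  have zero: "\<forall>z\<in>?V. of_real (- b) * complex_gradient z = 0"
  proof (rule holomorphic_Im_nonneg_vanishing_imp_zero[OF _ \<open>open ?V\<close> \<open>connected ?V\<close>])
    show "(\<lambda>z. of_real (- b) * complex_gradient z) holomorphic_on ?V"
      using \<open>complex_gradient holomorphic_on ?V\<close> by (intro holomorphic_intros)
    show "complex_of_point q \<in> ?V" using assms(1) by simp
    show "of_real (- b) * complex_gradient (complex_of_point q) = 0"
      using assms(2,3) by (simp add: complex_gradient_def)
    show "\<forall>z\<in>?V. 0 \<le> Im (of_real (- b) * complex_gradient z)"
      using b_sign UV by (auto simp: complex_gradient_def)
  qed
  have "of_real (- b) * complex_gradient (complex_of_point p) = 0"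
    using bspec[OF zero, of "complex_of_point p"] assms(4) by simp
  then have "complex_gradient (complex_of_point p) = 0" using b_unit by auto
  then show ?thesis by (simp add: complex_gradient_def complex_eq_iff)
qed

lemma py_nonzero:
  assumes "q \<in> S" "u q \<noteq> 0"
  shows "b * py u q > 0"
proof (rule ccontr)
  assume "\<not> b * py u q > 0"
  then have "py u q = 0" using b_sign assms(1) b_unit by force
  moreover from this have "px u q = 0" using bound assms(1) by force
  ultimately have flat: "px u p = 0 \<and> py u p = 0" if "p \<in> connected_component_set S q" for p
    using gradient_vanishes_on_component[OF assms(1) _ _ that] by blast
  let ?U = "connected_component_set S q"
  have "open ?U" by (rule open_connected_component[OF open_S])
  have "u constant_on ?U"
  proof (rule has_derivative_zero_connected_constant_on[OF connected_connected_component \<open>open ?U\<close> finite.emptyI])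
    show "continuous_on ?U u"
      by (rule continuous_on_subset[OF cont]) (use S_subset_B1 connected_component_subset in blast)
    show "\<forall>p\<in>?U - {}. (u has_derivative (\<lambda>h. 0)) (at p within ?U)"
    proof
      fix p assume "p \<in> ?U - {}"
      then have p: "p \<in> ?U" "p \<in> S" using connected_component_subset by auto
      have "(u has_derivative (\<lambda>h. px u p * fst h + py u p * snd h)) (at p)"
        by (rule has_derivative_gradient[OF differentiable_at_S(1)[OF p(2)]])
      then have "(u has_derivative (\<lambda>h. 0)) (at p)" using flat[OF p(1)] by simp
      then show "(u has_derivative (\<lambda>h. 0)) (at p within ?U)" by (rule has_derivative_at_withinI)
    qed
  qed
  moreover have "q \<in> ?U" using assms(1) by simp
  ultimately have "\<forall>p\<in>?U. u p = u q" unfolding constant_on_def by metis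
  then show False by (rule component_not_level[OF assms(1,2)])
qed

lemma u_strict_along_cone:
  assumes cone: "v \<in> ascent_cone a b M" and "P \<in> B1" "P + v \<in> B1" "u P \<noteq> 0"
  shows "u P < u (P + v)"
proof (rule ccontr)
  assume "\<not> u P < u (P + v)"
  then have end_eq: "u (P + v) = u P" using u_le_along_cone[OF assms(1-3)] by simp
  have const: "u (P + s *\<^sub>R v) = u P" if "s \<in> {0<..<1}" for s
  proof -
    have s: "0 < s" "s < 1" using that by auto
    have Ps: "P + s *\<^sub>R v \<in> B1" by (rule segment_in_B1) (use assms(2,3) s in auto)
    have "u P \<le> u (P + s *\<^sub>R v)"
      by (rule u_le_along_cone[OF ascent_cone_scaleR[OF cone s(1)] assms(2) Ps])
    moreover have "u (P + s *\<^sub>R v) \<le> u (P + s *\<^sub>R v + (1 - s) *\<^sub>R v)"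
      by (rule u_le_along_cone[OF ascent_cone_scaleR[OF cone] Ps]) (use s assms(3) in \<open>simp_all add: algebra_simps\<close>)
    moreover have "P + s *\<^sub>R v + (1 - s) *\<^sub>R v = P + v" by (simp add: algebra_simps)
    ultimately show ?thesis using end_eq by simp
  qed
  let ?m = "P + (1/2) *\<^sub>R v"
  have "?m \<in> B1" by (rule segment_in_B1) (use assms(2,3) in auto)
  then have m: "?m \<in> S" "u ?m \<noteq> 0" using const[of "1/2"] assms(4) nonzero_in_S by auto
  text \<open>The slope of u along the segment is positive at the midpoint, yet u is constant there.\<close>
  have "0 < b * py u ?m * (b * snd v - M * max 0 (- a * fst v))"
    using py_nonzero[OF m] cone by (simp add: ascent_cone_def)
  also have "\<dots> \<le> px u ?m * fst v + py u ?m * snd v" by (rule gradient_dot_lower_bound[OF m(1)])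
  also have "\<dots> = 0"
  proof (rule DERIV_unique[OF _ DERIV_const])
    show "((\<lambda>s. u P) has_real_derivative px u ?m * fst v + py u ?m * snd v) (at (1/2))"
      by (rule has_field_derivative_transform_within_open[OF DERIV_along_line[OF m(1)], of "{0<..<1}"])
        (use const in auto)
  qed
  finally show False by simp
qed

lemma level_set_cone_free:
  assumes "P \<in> B1" "Q \<in> B1" "u P = c" "u Q = c" "c \<noteq> 0"
  shows "Q - P \<notin> ascent_cone a b M"
  using u_strict_along_cone[of "Q - P" P] assms by auto

lemma level_set_vertical_unique:
  assumes "(x, y) \<in> B1" "(x, y') \<in> B1" "u (x, y) = c" "u (x, y') = c" "c \<noteq> 0"
  shows "y = y'"
proof -
  have "(x, y') - (x, y) \<notin> ascent_cone a b M" "- ((x, y') - (x, y)) \<notin> ascent_cone a b M"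
    using level_set_cone_free[OF assms(1,2,3,4,5)] level_set_cone_free[OF assms(2,1,4,3,5)] by simp_all
  from not_in_ascent_cone_both_ways(1)[OF a_unit b_unit M_nonneg this] show ?thesis by simp
qed

lemma Re_primitive_minus_u_has_derivative_zero:
  assumes "p \<in> S" and F: "(F has_field_derivative complex_gradient (complex_of_point p)) (at (complex_of_point p))"
  shows "((\<lambda>p. Re (F (complex_of_point p)) - u p) has_derivative (\<lambda>h. 0)) (at p)"
proof -
  from has_derivative_Re[OF diff_chain_at[OF has_derivative_complex_of_point F[unfolded has_field_derivative_def]]]
  have "((\<lambda>p. Re (F (complex_of_point p))) has_derivative
          (\<lambda>h. Re (complex_gradient (complex_of_point p) * complex_of_point h))) (at p)"
    by (simp add: o_def)
  from has_derivative_diff[OF this has_derivative_gradient[OF differentiable_at_S(1)[OF assms(1)]]]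
  have "((\<lambda>p. Re (F (complex_of_point p)) - u p) has_derivative
          (\<lambda>h. Re (complex_gradient (complex_of_point p) * complex_of_point h)
               - (px u p * fst h + py u p * snd h))) (at p)" .
  moreover have "(\<lambda>h. Re (complex_gradient (complex_of_point p) * complex_of_point h)
               - (px u p * fst h + py u p * snd h)) = (\<lambda>h. 0)"
    by (simp add: fun_eq_iff complex_gradient_def complex_of_point_def point_of_complex_def)
  ultimately show ?thesis by simp
qed

lemma holomorphic_potential:
  assumes "p0 \<in> S"
  shows "\<exists>\<rho> F. \<rho> > 0 \<and> ball p0 \<rho> \<subseteq> S
           \<and> (\<forall>z\<in>ball (complex_of_point p0) \<rho>. (F has_field_derivative complex_gradient z) (at z))
           \<and> (\<forall>p\<in>ball p0 \<rho>. Re (F (complex_of_point p)) = u p)"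
proof -
  let ?z0 = "complex_of_point p0"
  have z0S: "?z0 \<in> point_of_complex -` S" using assms by simp
  obtain \<rho> where \<rho>: "\<rho> > 0" "ball ?z0 \<rho> \<subseteq> point_of_complex -` S"
    by (rule openE[OF open_point_preimage[OF open_S] z0S])
  have ball_eq: "complex_of_point p \<in> ball ?z0 \<rho> \<longleftrightarrow> p \<in> ball p0 \<rho>" for p
    by (simp add: dist_complex_of_point)
  have "ball p0 \<rho> \<subseteq> S"
  proof
    fix p assume "p \<in> ball p0 \<rho>"
    then have "complex_of_point p \<in> ball ?z0 \<rho>" by (simp only: ball_eq)
    then show "p \<in> S" using \<rho>(2) by auto
  qed
  have holo: "complex_gradient holomorphic_on ball ?z0 \<rho>"
    using complex_gradient_holomorphic \<rho>(2) by (rule holomorphic_on_subset)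
  obtain F0 where F0: "\<And>z. z \<in> ball ?z0 \<rho> \<Longrightarrow> (F0 has_field_derivative complex_gradient z) (at z within ball ?z0 \<rho>)"
    using holomorphic_convex_primitive[OF convex_ball finite.emptyI holomorphic_on_imp_continuous_on[OF holo]]
      holomorphic_on_imp_differentiable_at[OF holo open_ball] by auto
  define F where "F z = F0 z - of_real (Re (F0 ?z0) - u p0)" for z
  have Fd: "(F has_field_derivative complex_gradient z) (at z)" if "z \<in> ball ?z0 \<rho>" for z
    unfolding F_def[abs_def] using F0[OF that] at_within_open[OF that open_ball]
    by (auto intro!: derivative_eq_intros)
  text \<open>Re (F \<circ> complex_of_point) and u have the same gradient, and agree at p0.\<close>
  have "((\<lambda>p. Re (F (complex_of_point p)) - u p) has_derivative (\<lambda>h. 0)) (at p within ball p0 \<rho>)"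
    if p: "p \<in> ball p0 \<rho>" for p
    by (rule has_derivative_at_withinI[OF Re_primitive_minus_u_has_derivative_zero[OF _ Fd]])
      (use p ball_eq \<open>ball p0 \<rho> \<subseteq> S\<close> in blast)+
  from has_derivative_zero_constant[OF convex_ball this]
  obtain k where k: "\<forall>p\<in>ball p0 \<rho>. Re (F (complex_of_point p)) - u p = k" by blast
  have "k = 0" using bspec[OF k, of p0] \<rho>(1) by (simp add: F_def)
  then have "\<forall>p\<in>ball p0 \<rho>. Re (F (complex_of_point p)) = u p" using k by simp
  then show ?thesis using \<rho>(1) \<open>ball p0 \<rho> \<subseteq> S\<close> Fd by blast
qed

lemma level_curve_parametrization:
  assumes "p0 \<in> B1" "u p0 \<noteq> 0"
  shows "\<exists>\<epsilon> h. \<epsilon> > 0 \<and> h holomorphic_on ball 0 \<epsilon> \<and> Re (h 0) = fst p0 \<and> Re (deriv h 0) \<noteq> 0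
           \<and> (\<forall>t. \<bar>t\<bar> < \<epsilon> \<longrightarrow> point_of_complex (h (of_real t)) \<in> B1
                   \<and> u (point_of_complex (h (of_real t))) = u p0)"
proof -
  have p0: "p0 \<in> S" using nonzero_in_S assms by blast
  let ?z0 = "complex_of_point p0"
  obtain \<rho> F where \<rho>: "\<rho> > 0" "ball p0 \<rho> \<subseteq> S"
    and Fd: "\<forall>z\<in>ball ?z0 \<rho>. (F has_field_derivative complex_gradient z) (at z)"
    and ReF: "\<forall>p\<in>ball p0 \<rho>. Re (F (complex_of_point p)) = u p"
    using holomorphic_potential[OF p0] by blast
  have holo: "F holomorphic_on ball ?z0 \<rho>" using Fd holomorphic_on_open[OF open_ball] by blast
  have dF: "deriv F ?z0 = complex_gradient ?z0"
    using bspec[OF Fd, of ?z0] \<rho>(1) by (simp add: DERIV_imp_deriv)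
  have Im_g: "Im (complex_gradient ?z0) \<noteq> 0"
    using py_nonzero[OF p0 assms(2)] by (auto simp: complex_gradient_def)
  then have "deriv F ?z0 \<noteq> 0" using dF by auto
  from holomorphic_local_inverse_on_vertical_line[OF holo \<rho>(1) this]
  obtain \<epsilon> h where \<epsilon>: "\<epsilon> > 0" and h: "h holomorphic_on ball 0 \<epsilon>" "h 0 = ?z0"
      "deriv h 0 = \<i> / deriv F ?z0" and hF: "\<forall>t\<in>ball 0 \<epsilon>. h t \<in> ball ?z0 \<rho> \<and> F (h t) = F ?z0 + \<i> * t"
    by blast
  have "Re (h 0) = fst p0" using h(2) by (simp add: complex_of_point_def)
  moreover have "Re (deriv h 0) \<noteq> 0"
    using Im_g by (simp add: h(3) dF Re_divide sum_power2_eq_zero_iff)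
  moreover have "point_of_complex (h (of_real t)) \<in> B1 \<and> u (point_of_complex (h (of_real t))) = u p0"
    if "\<bar>t\<bar> < \<epsilon>" for t
  proof -
    let ?p = "point_of_complex (h (of_real t))"
    have "h (of_real t) \<in> ball ?z0 \<rho>" "F (h (of_real t)) = F ?z0 + \<i> * of_real t" using hF that by auto
    then have p: "?p \<in> ball p0 \<rho>" and "Re (F (complex_of_point ?p)) = Re (F ?z0)"
      using dist_complex_of_point[of p0 ?p] by auto
    moreover have "Re (F ?z0) = u p0" using ReF \<rho>(1) by simp
    ultimately have "u ?p = u p0" using bspec[OF ReF p] by simp
    moreover have "?p \<in> B1" using p \<rho>(2) S_subset_B1 by blast
    ultimately show ?thesis by simp
  qed
  ultimately show ?thesis using \<epsilon> h(1) by blast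
qed

lemma graph_in_level_set_real_analytic:
  assumes "c \<noteq> 0" and on_level: "\<And>x. x \<in> I \<Longrightarrow> (x, f x) \<in> B1 \<and> u (x, f x) = c"
  shows "real_analytic_on I f"
  unfolding real_analytic_on_def
proof
  fix x0 assume "x0 \<in> I"
  obtain \<epsilon> h where \<epsilon>: "\<epsilon> > 0" and h: "h holomorphic_on ball 0 \<epsilon>" "Re (h 0) = x0" "Re (deriv h 0) \<noteq> 0"
    and curve: "\<forall>t. \<bar>t\<bar> < \<epsilon> \<longrightarrow> point_of_complex (h (of_real t)) \<in> B1
                     \<and> u (point_of_complex (h (of_real t))) = c"
    using level_curve_parametrization[of "(x0, f x0)"] on_level[OF \<open>x0 \<in> I\<close>] assms(1) by auto
  obtain r \<phi> where r: "r > 0" and \<phi>: "\<phi> holomorphic_on ball (of_real x0) r"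
    and graph: "\<forall>x. \<bar>x - x0\<bar> < r \<longrightarrow>
      (\<exists>t. \<bar>t\<bar> < \<epsilon> \<and> Re (h (of_real t)) = x \<and> Re (\<phi> (of_real x)) = Im (h (of_real t)))"
    using holomorphic_curve_local_graph[OF h(1) \<epsilon> h(3)] h(2) by auto
  obtain coeff where coeff: "\<forall>x. \<bar>x - x0\<bar> < r \<longrightarrow> (\<lambda>n. coeff n * (x - x0) ^ n) sums Re (\<phi> (of_real x))"
    using Re_holomorphic_real_power_series[OF \<phi>] by blast
  text \<open>Near x0 the level curve is the graph of Re \<phi>; by vertical uniqueness on the level set,
    so is the graph of f.\<close>
  have eq: "f x = Re (\<phi> (of_real x))" if x: "x \<in> I" "\<bar>x - x0\<bar> < r" for x
  proof -
    obtain t where "\<bar>t\<bar> < \<epsilon>" "Re (h (of_real t)) = x" "Re (\<phi> (of_real x)) = Im (h (of_real t))"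
      using graph x(2) by blast
    then have "(x, Re (\<phi> (of_real x))) \<in> B1" "u (x, Re (\<phi> (of_real x))) = c"
      using curve by (auto simp: point_of_complex_def)
    then show ?thesis using level_set_vertical_unique on_level[OF x(1)] assms(1) by blast
  qed
  show "\<exists>r>0. \<exists>a. \<forall>x\<in>I. \<bar>x - x0\<bar> < r \<longrightarrow> (\<lambda>n. a n * (x - x0) ^ n) sums f x"
  proof (intro exI[of _ r] conjI exI[of _ coeff] ballI impI)
    show "r > 0" by (rule r)
    fix x assume "x \<in> I" "\<bar>x - x0\<bar> < r"
    then show "(\<lambda>n. coeff n * (x - x0) ^ n) sums f x" using coeff eq by simp
  qed
qed

lemma level_component_graph:
  assumes "c \<noteq> 0" "C \<in> components {p \<in> B1. u p = c}"
  shows "\<exists>I f. is_interval I \<and> C = graph_over I f \<and> (mono_on I f \<or> antimono_on I f)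
            \<and> real_analytic_on I f \<and> M-lipschitz_on I f"
proof -
  have level: "C \<subseteq> {p \<in> B1. u p = c}" using assms(2) by (rule in_components_subset)
  have "\<exists>I f. is_interval I \<and> C = graph_over I f \<and> (mono_on I f \<or> antimono_on I f) \<and> M-lipschitz_on I f"
  proof (rule cone_free_set_is_monotone_lipschitz_graph[OF a_unit b_unit M_nonneg in_components_connected[OF assms(2)]])
    fix P Q assume "P \<in> C" "Q \<in> C"
    then show "Q - P \<notin> ascent_cone a b M" using level level_set_cone_free assms(1) by blast
  qed
  then show ?thesis
  proof (elim exE conjE)
    fix I f assume I: "is_interval I" and C: "C = graph_over I f"
      and mono: "mono_on I f \<or> antimono_on I f" and lip: "M-lipschitz_on I f"
    have "(x, f x) \<in> B1 \<and> u (x, f x) = c" if "x \<in> I" for x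
      using level that by (auto simp: C graph_over_def)
    then have "real_analytic_on I f" by (rule graph_in_level_set_real_analytic[OF assms(1)])
    then show ?thesis by (intro exI[of _ I] exI[of _ f] conjI I C mono lip)
  qed
qed

end

lemma nonstrict_sign_on_unit_multiplier:
  assumes "nonstrict_sign_on S g"
  shows "\<exists>s\<in>{-1, 1 :: real}. \<forall>p\<in>S. s * g p \<ge> 0"
proof (cases "\<forall>p\<in>S. g p \<ge> 0")
  case True
  then show ?thesis by (intro bexI[of _ 1]) auto
next
  case False
  then have "\<forall>p\<in>S. g p \<le> 0" using assms by (auto simp: nonstrict_sign_on_def)
  then show ?thesis by (intro bexI[of _ "-1"]) auto
qed

theorem lemma3p6:
  fixes u :: "real \<times> real \<Rightarrow> real" and M :: real
  assumes cont: "continuous_on B1 u"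
    and C2: "C2_on (Omega_plus u \<union> Omega_minus u) u"
    and harm: "harmonic_on (Omega_plus u \<union> Omega_minus u) u"
    and Gamma_ne: "free_boundary u \<noteq> {}"
    and sign_x: "nonstrict_sign_on (Omega_plus u \<union> Omega_minus u) (px u)"
    and sign_y: "nonstrict_sign_on (Omega_plus u \<union> Omega_minus u) (py u)"
    and bound: "\<forall>p \<in> Omega_plus u \<union> Omega_minus u. \<bar>px u p\<bar> \<le> M * \<bar>py u p\<bar>"
  shows "(\<forall>c. c \<noteq> 0 \<longrightarrow> (\<forall>C \<in> components {p \<in> B1. u p = c}.
            \<exists>I f. is_interval I \<and> C = graph_over I f \<and> (mono_on I f \<or> antimono_on I f)
                  \<and> real_analytic_on I f \<and> M-lipschitz_on I f))
       \<and> (\<forall>C \<in> components (free_boundary u).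
            \<exists>I f. is_interval I \<and> C = graph_over I f \<and> (mono_on I f \<or> antimono_on I f)
                  \<and> M-lipschitz_on I f)"
proof -
  obtain a where a: "a \<in> {-1, 1}" "\<forall>p \<in> Omega_plus u \<union> Omega_minus u. a * px u p \<ge> 0"
    using nonstrict_sign_on_unit_multiplier[OF sign_x] by blast
  obtain b where b: "b \<in> {-1, 1}" "\<forall>p \<in> Omega_plus u \<union> Omega_minus u. b * py u p \<ge> 0"
    using nonstrict_sign_on_unit_multiplier[OF sign_y] by blast
  interpret monotone_two_phase u M a b
    by unfold_locales (use cont C2 harm Gamma_ne bound a b in auto)
  show ?thesis
    by (intro conjI allI impI ballI level_component_graph free_boundary_component_graph)
qed

end
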